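(* Let $\mathcal F$ be an infinite family of closed convex sets in $\mathbb R^d$ satisfying the $(d+1,d+1)$-property and such that $\bigcap_{A\in\mathcal F}A=\emptyset$. Then there is a unit vector $v\in\mathbb R^d$ such that for every $A\in\mathcal F$ and every $a\in A$ we have $\{a+tv : t\ge0\}\subseteq A$.
   Context: The $(d+1,d+1)$-property means that every $d+1$ members of the family have a common point. *)

theory Defs
  imports "HOL-Analysis.Analysis"
begin

end

theory Submission
  imports Defs
begin

(* Since F is infinite, Helly's theorem upgrades the (d+1,d+1)-property to the finite
   intersection property. An intersection of finitely many members of F is therefore never
   bounded: it would be compact, and compactness together with the finite intersection property
   would make the intersection of all of F nonempty. An unbounded closed convex set contains a
   ray, whose direction lies in the recession cone of every member of the finite subfamily. So the
   closed sets "unit sphere intersected with the recession cone of A", A in F, have the finite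
   intersection property, and compactness of the sphere yields a common unit direction. *)

definition recession_cone :: "'a::real_vector set \<Rightarrow> 'a set" where
  "recession_cone A = {u. \<forall>a\<in>A. \<forall>t\<ge>0. a + t *\<^sub>R u \<in> A}"

lemma closed_recession_cone:
  fixes A :: "'a::real_normed_vector set"
  assumes "closed A"
  shows "closed (recession_cone A)"
proof -
  have "recession_cone A = (\<Inter>a\<in>A. \<Inter>t\<in>{0..}. (\<lambda>u. a + t *\<^sub>R u) -` A)"
    by (auto simp: recession_cone_def)
  also have "closed \<dots>"
    using assms by (intro closed_INT ballI continuous_closed_vimage continuous_intros)
  finally show ?thesis .
qed

text \<open>For closed convex sets a single ray suffices: \<open>b + t u\<close> is the limit, as \<open>l \<rightarrow> 0\<^sup>+\<close>,
  of the convex combinations \<open>(1 - l) b + l (s + (t / l) u)\<close> of \<open>b\<close> with points of the ray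
  from \<open>s\<close>.\<close>

lemma recession_coneI:
  fixes A :: "'a::real_normed_vector set"
  assumes "closed A" "convex A" "s \<in> A"
    and ray: "\<And>t. t \<ge> 0 \<Longrightarrow> s + t *\<^sub>R u \<in> A"
  shows "u \<in> recession_cone A"
  unfolding recession_cone_def
proof (intro CollectI ballI allI impI)
  fix b t assume "b \<in> A" "(t::real) \<ge> 0"
  let ?f = "\<lambda>l. b + t *\<^sub>R u + l *\<^sub>R (s - b)"
  have "(?f \<longlongrightarrow> b + t *\<^sub>R u + 0 *\<^sub>R (s - b)) (at_right 0)"
    by (intro tendsto_intros)
  then have "(?f \<longlongrightarrow> b + t *\<^sub>R u) (at_right 0)"
    by simp
  moreover have "eventually (\<lambda>l. ?f l \<in> A) (at_right 0)"
  proof (rule eventually_at_rightI[of 0 1])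
    fix l :: real assume l: "l \<in> {0<..<1}"
    have "(1 - l) *\<^sub>R b + l *\<^sub>R (s + (t / l) *\<^sub>R u) \<in> A"
      using l \<open>t \<ge> 0\<close> by (intro convexD_alt[OF \<open>convex A\<close> \<open>b \<in> A\<close> ray]) auto
    also have "(1 - l) *\<^sub>R b + l *\<^sub>R (s + (t / l) *\<^sub>R u) = ?f l"
      using l by (simp add: algebra_simps)
    finally show "?f l \<in> A" .
  qed simp
  ultimately show "b + t *\<^sub>R u \<in> A"
    using \<open>closed A\<close> by (intro Lim_in_closed_set) auto
qed

lemma unbounded_closed_convex_contains_ray:
  fixes S :: "'a::{real_normed_vector, perfect_space, heine_borel} set"
  assumes "closed S" "convex S" "a \<in> S" "\<not> bounded S"
  obtains u where "norm u = 1" "\<And>t. t \<ge> 0 \<Longrightarrow> a + t *\<^sub>R u \<in> S"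
proof -
  have "sphere 0 1 \<inter> (\<Inter>t\<in>{0..}. {u. a + t *\<^sub>R u \<in> S}) \<noteq> {}"
  proof (rule compact_imp_fip_image)
    show "closed {u. a + t *\<^sub>R u \<in> S}" for t
      using continuous_closed_vimage[OF \<open>closed S\<close>, of "\<lambda>u. a + t *\<^sub>R u"]
      by (simp add: vimage_def continuous_intros)
  next
    fix T :: "real set" assume "finite T" "T \<subseteq> {0..}"
    obtain x where "x \<in> S" and far: "dist a x > Max (insert 0 T)"
      using \<open>\<not> bounded S\<close> unfolding bounded_any_center[of S a] by (meson not_le)
    define r where "r = dist a x"
    define u where "u = (1 / r) *\<^sub>R (x - a)"
    have "r > 0"
      using far \<open>finite T\<close> unfolding r_def
      by (meson Max_ge finite_insert insertI1 le_less_trans)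
    then have "norm u = 1"
      by (simp add: u_def r_def dist_norm norm_minus_commute)
    moreover have "a + t *\<^sub>R u \<in> S" if "t \<in> T" for t
    proof -
      have "t \<le> r"
        using that far \<open>finite T\<close> unfolding r_def
        by (meson Max_ge finite_insert insertCI less_imp_le order_trans)
      then have "(1 - t / r) *\<^sub>R a + (t / r) *\<^sub>R x \<in> S"
        using that \<open>T \<subseteq> {0..}\<close> \<open>r > 0\<close>
        by (intro convexD_alt[OF \<open>convex S\<close> \<open>a \<in> S\<close> \<open>x \<in> S\<close>]) auto
      also have "(1 - t / r) *\<^sub>R a + (t / r) *\<^sub>R x = a + t *\<^sub>R u"
        by (simp add: u_def algebra_simps)
      finally show ?thesis .
    qed
    ultimately show "sphere 0 1 \<inter> (\<Inter>t\<in>T. {u. a + t *\<^sub>R u \<in> S}) \<noteq> {}"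
      by auto
  qed simp
  then obtain u where "u \<in> sphere 0 1" "\<forall>t\<in>{0..}. a + t *\<^sub>R u \<in> S"
    by blast
  then show thesis
    using that by auto
qed

lemma unbounded_Inter_of_finite_intersection_property:
  fixes F :: "'a::heine_borel set set"
  assumes "\<forall>A\<in>F. closed A" and fip: "\<And>G. finite G \<Longrightarrow> G \<subseteq> F \<Longrightarrow> \<Inter>G \<noteq> {}"
    and "\<Inter>F = {}" "finite G" "G \<subseteq> F"
  shows "\<not> bounded (\<Inter>G)"
proof
  assume "bounded (\<Inter>G)"
  moreover have "closed (\<Inter>G)"
    using assms by blast
  ultimately have "compact (\<Inter>G)"
    by (simp add: compact_eq_bounded_closed)
  then have "\<Inter>G \<inter> \<Inter>F \<noteq> {}"
  proof (rule compact_imp_fip)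
    show "\<Inter>G \<inter> \<Inter>H \<noteq> {}" if "finite H" "H \<subseteq> F" for H
      using fip[of "G \<union> H"] that \<open>finite G\<close> \<open>G \<subseteq> F\<close> by (simp add: Inter_Un_distrib)
  qed (use assms in blast)
  with \<open>\<Inter>F = {}\<close> show False
    by simp
qed

lemma common_recession_direction:
  fixes F :: "'a::{real_normed_vector, perfect_space, heine_borel} set set"
  assumes closed_convex: "\<forall>A\<in>F. closed A \<and> convex A"
    and fip: "\<And>G. finite G \<Longrightarrow> G \<subseteq> F \<Longrightarrow> \<Inter>G \<noteq> {}"
    and "\<Inter>F = {}"
  obtains v where "norm v = 1" "\<And>A. A \<in> F \<Longrightarrow> v \<in> recession_cone A"
proof -
  have "sphere 0 1 \<inter> (\<Inter>A\<in>F. recession_cone A) \<noteq> {}"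
  proof (rule compact_imp_fip_image)
    show "closed (recession_cone A)" if "A \<in> F" for A
      using that closed_convex closed_recession_cone by blast
  next
    fix G assume "finite G" "G \<subseteq> F"
    have "closed (\<Inter>G)" "convex (\<Inter>G)"
      using \<open>G \<subseteq> F\<close> closed_convex by (blast intro: closed_Inter convex_Inter)+
    moreover have "\<not> bounded (\<Inter>G)"
      using closed_convex fip \<open>\<Inter>F = {}\<close> \<open>finite G\<close> \<open>G \<subseteq> F\<close>
      by (intro unbounded_Inter_of_finite_intersection_property) auto
    moreover obtain a where "a \<in> \<Inter>G"
      using fip[OF \<open>finite G\<close> \<open>G \<subseteq> F\<close>] by blast
    ultimately obtain u where "norm u = 1" and ray: "\<And>t. t \<ge> 0 \<Longrightarrow> a + t *\<^sub>R u \<in> \<Inter>G"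
      by (metis unbounded_closed_convex_contains_ray)
    have "u \<in> recession_cone A" if "A \<in> G" for A
    proof (rule recession_coneI)
      show "a \<in> A" "\<And>t. t \<ge> 0 \<Longrightarrow> a + t *\<^sub>R u \<in> A"
        using that \<open>a \<in> \<Inter>G\<close> ray by blast+
    qed (use that \<open>G \<subseteq> F\<close> closed_convex in auto)
    with \<open>norm u = 1\<close> show "sphere 0 1 \<inter> (\<Inter>A\<in>G. recession_cone A) \<noteq> {}"
      by auto
  qed simp
  then obtain v where "v \<in> sphere 0 1" "\<forall>A\<in>F. v \<in> recession_cone A"
    by blast
  then show thesis
    by (intro that) auto
qed

lemma Helly_finite_subfamily:
  fixes F :: "'a::euclidean_space set set"
  assumes "infinite F" "\<forall>A\<in>F. convex A"
    and Helly_property: "\<forall>G. G \<subseteq> F \<and> finite G \<and> card G = DIM('a) + 1 \<longrightarrow> \<Inter>G \<noteq> {}"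
    and "finite G" "G \<subseteq> F"
  shows "\<Inter>G \<noteq> {}"
proof -
  obtain H where H: "finite H" "card H = DIM('a) + 1" "H \<subseteq> F"
    using infinite_arbitrarily_large[OF \<open>infinite F\<close>] by blast
  have "finite (G \<union> H)" "G \<union> H \<subseteq> F"
    using H \<open>finite G\<close> \<open>G \<subseteq> F\<close> by auto
  have "\<Inter>(G \<union> H) \<noteq> {}"
  proof (rule Helly)
    show "card (G \<union> H) \<ge> DIM('a) + 1"
      using H \<open>finite (G \<union> H)\<close> by (metis card_mono sup_ge2)
    show "\<forall>A\<in>G \<union> H. convex A"
      using assms(2) \<open>G \<union> H \<subseteq> F\<close> by blast
    show "\<Inter>K \<noteq> {}" if "K \<subseteq> G \<union> H" "card K = DIM('a) + 1" for K
      using Helly_property that \<open>finite (G \<union> H)\<close> \<open>G \<union> H \<subseteq> F\<close> finite_subset by blast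
  qed
  then show ?thesis
    by auto
qed

theorem lemma5p1:
  fixes F :: "('a::euclidean_space) set set"
  assumes "infinite F"
    and "\<forall>A\<in>F. closed A \<and> convex A"
    and "\<forall>G. G \<subseteq> F \<and> finite G \<and> card G = DIM('a) + 1 \<longrightarrow> \<Inter>G \<noteq> {}"
    and "\<Inter>F = {}"
  shows "\<exists>v::'a. norm v = 1 \<and> (\<forall>A\<in>F. \<forall>a\<in>A. \<forall>t::real. t \<ge> 0 \<longrightarrow> a + t *\<^sub>R v \<in> A)"
proof -
  have "\<Inter>G \<noteq> {}" if "finite G" "G \<subseteq> F" for G
    using Helly_finite_subfamily[OF assms(1) _ assms(3) that] assms(2) by blast
  then obtain v where "norm v = 1" "\<And>A. A \<in> F \<Longrightarrow> v \<in> recession_cone A"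
    using common_recession_direction[OF assms(2) _ assms(4)] by blast
  then show ?thesis
    unfolding recession_cone_def by blast
qed

end
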